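(* Let $\alpha,\theta_2\in(0,\pi/2)$ satisfy $$\frac{1}{\cos\alpha}\ln\Big(\frac{1}{\sin\alpha}+\cot\alpha\Big)=(\pi-\theta_2)\cot\theta_2.$$ Then $$\frac{1}{\sin\alpha}+\frac{1}{\cot\alpha}\ln\Big(\frac{1}{\sin\alpha}+\cot\alpha\Big)\ge\frac{\pi-\theta_2}{\sin\theta_2}-\cos\theta_2.$$ *)

theory Defs
  imports Complex_Main
begin

end

theory Submission imports Defs "HOL-Analysis.Complex_Transcendental" begin

(*
  Write s = sin \<alpha>, and let L = ln (1/sin \<alpha> + cot \<alpha>), the inverse Gudermannian of
  pi/2 - \<alpha>: it satisfies sinh L = cot \<alpha> and cosh L = 1/sin \<alpha>, hence tanh L = cos \<alpha>.
  Put H = L / cos \<alpha>, the common value of both sides of the hypothesis.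

  Alpha side.  From tanh L \<le> L \<le> sinh L we get H \<ge> 1 and s * H \<le> 1.  The left-hand
  side equals 1/s + s * H, and (1/s - H)(1 - s) \<ge> 0 gives 1/s + s * H \<ge> 1 + H.

  With P = pi - \<theta>\<^sub>2, H = P cot \<theta>\<^sub>2 \<ge> 1 says P cos \<theta>\<^sub>2 \<ge> sin \<theta>\<^sub>2, and the
  right-hand side is at most 1 + H iff P (1 - cos \<theta>\<^sub>2) \<le> sin \<theta>\<^sub>2 (1 + cos \<theta>\<^sub>2).  This is a
  numerical fact about angles in (0, pi/2): for \<theta>\<^sub>2 \<ge> 1.13 the premise P cos \<theta>\<^sub>2 \<ge> sin \<theta>\<^sub>2
  fails (by monotonicity and Taylor bounds at 1.13), and for \<theta>\<^sub>2 \<le> 1.13 the conclusion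
  follows from Taylor polynomials of sin and cos and a polynomial inequality.
*)

text \<open>Each bound is a Maclaurin polynomial; the Lagrange remainder has a definite sign
  because its intermediate point lies in (0, pi/2), where cosine is nonnegative.\<close>

lemma sin_ge_taylor3:
  fixes z :: real assumes "0 < z" "z \<le> pi/2"
  shows "z - z^3/6 \<le> sin z"
proof -
  obtain t where t: "0 < t" "t < z" and expansion:
    "sin z = (\<Sum>m<5. sin_coeff m * z ^ m) + (sin (t + 1/2 * real 5 * pi) / fact 5) * z ^ 5"
    using Maclaurin_sin_expansion3[of 5 z] assms by auto
  have "t + 1/2 * real 5 * pi = (t + pi/2) + 2 * pi" by simp
  then have remainder: "sin (t + 1/2 * real 5 * pi) = cos t"
    by (simp only: sin_periodic) (simp add: sin_add)
  have "0 \<le> cos t * z^5" using t assms by (simp add: cos_ge_zero)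
  moreover have "(\<Sum>m<5. sin_coeff m * z ^ m) = z - z^3/6"
    by (simp add: sin_coeff_def lessThan_nat_numeral fact_numeral)
  ultimately show ?thesis using expansion remainder by (simp add: fact_numeral)
qed

lemma cos_le_taylor4:
  fixes z :: real assumes "0 < z" "z \<le> pi/2"
  shows "cos z \<le> 1 - z^2/2 + z^4/24"
proof -
  obtain t where t: "0 < t" "t < z" and expansion:
    "cos z = (\<Sum>m<6. cos_coeff m * z ^ m) + (cos (t + 1/2 * real 6 * pi) / fact 6) * z ^ 6"
    using Maclaurin_cos_expansion2[OF assms(1), of 6] by auto
  have remainder: "cos (t + 1/2 * real 6 * pi) = - cos t" by (simp add: cos_add)
  have "cos t \<ge> 0" using t assms by (intro cos_ge_zero) auto
  moreover have "(\<Sum>m<6. cos_coeff m * z ^ m) = 1 - z^2/2 + z^4/24"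
    by (simp add: cos_coeff_def lessThan_nat_numeral fact_numeral)
  ultimately show ?thesis using expansion remainder by (simp add: fact_numeral)
qed

lemma cos_ge_taylor6:
  fixes z :: real assumes "0 < z" "z \<le> pi/2"
  shows "1 - z^2/2 + z^4/24 - z^6/720 \<le> cos z"
proof -
  obtain t where t: "0 < t" "t < z" and expansion:
    "cos z = (\<Sum>m<8. cos_coeff m * z ^ m) + (cos (t + 1/2 * real 8 * pi) / fact 8) * z ^ 8"
    using Maclaurin_cos_expansion2[OF assms(1), of 8] by auto
  have remainder: "cos (t + 1/2 * real 8 * pi) = cos t" by (simp add: cos_add)
  have "cos t \<ge> 0" using t assms by (intro cos_ge_zero) auto
  moreover have "(\<Sum>m<8. cos_coeff m * z ^ m) = 1 - z^2/2 + z^4/24 - z^6/720"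
    by (simp add: cos_coeff_def lessThan_nat_numeral fact_numeral)
  ultimately show ?thesis using expansion remainder by (simp add: fact_numeral)
qed

lemma pi_le_31416: "pi \<le> 31416/10000"
  using pi_approx by simp

text \<open>Since sin is
  increasing and (pi - z) cos z decreasing there, it suffices to check this at z = 1.13,
  where the Taylor bounds leave a comfortable margin.\<close>

lemma supplement_times_cos_lt_sin:
  fixes z :: real assumes "113/100 \<le> z" "z \<le> pi/2"
  shows "(pi - z) * cos z < sin z"
proof -
  define a :: real where "a = 113/100"
  have a: "0 < a" "a \<le> pi/2" using pi_approx by (simp_all add: a_def)
  have "(pi - z) * cos z \<le> (pi - a) * cos a"
  proof (rule mult_mono)
    show "cos z \<le> cos a" using assms a by (subst cos_mono_le_eq) (auto simp: a_def)
    show "0 \<le> cos z" using assms a by (intro cos_ge_zero) (auto simp: a_def)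
  qed (use assms a in \<open>auto simp: a_def\<close>)
  also have "\<dots> \<le> (31416/10000 - a) * (1 - a^2/2 + a^4/24)"
  proof (rule mult_mono)
    show "cos a \<le> 1 - a^2/2 + a^4/24" using cos_le_taylor4[OF a] .
    show "0 \<le> cos a" using a by (intro cos_ge_zero) auto
  qed (use pi_le_31416 assms in \<open>auto simp: a_def\<close>)
  also have "\<dots> < a - a^3/6" by (simp add: a_def power_divide)
  also have "\<dots> \<le> sin a" using sin_ge_taylor3[OF a] .
  also have "\<dots> \<le> sin z" using assms a by (subst sin_mono_le_eq) (auto simp: a_def)
  finally show ?thesis .
qed

text \<open>The polynomial inequality behind the small-angle estimate, checked on the two
  subintervals [0, 0.9] and [0.9, 1.13] after expanding around the left endpoint; on each
  piece the negative monomials are dominated using the interval bounds.\<close>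

lemma small_angle_polynomial:
  fixes z :: real assumes "0 \<le> z" "z \<le> 113/100"
  shows "(31416/10000 - z) * (z/2 - z^3/24 + z^5/720) \<le> (1 - z^2/6) * (2 - z^2/2)"
proof (cases "z \<le> 9/10")
  case True
  have pow: "z^2 \<le> 81/100" "z^5 \<le> 59049/100000"
    using power_mono[OF True assms(1), of 2] power_mono[OF True assms(1), of 5]
    by (simp_all add: power_divide)
  have "(1 - z^2/6) * (2 - z^2/2) - (31416/10000 - z) * (z/2 - z^3/24 + z^5/720) =
      2 - 3927/2500 * z - 1/3 * z^2 + 1309/10000 * z^3 + 1/24 * z^4
        - 1309/300000 * z^5 + 1/720 * z^6"
    by (simp add: eval_nat_numeral field_simps)
  moreover have "0 \<le> z^3" "0 \<le> z^4" "0 \<le> z^6" using assms by simp_all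
  ultimately show ?thesis using pow True by linarith
next
  case False
  define y where "y = z - 9/10"
  then have z: "z = y + 9/10" by simp
  have y: "0 \<le> y" "y \<le> 23/100" using False assms by (simp_all add: y_def)
  have "(1 - z^2/6) * (2 - z^2/2) - (31416/10000 - z) * (z/2 - z^3/24 + z^5/720) =
      2186026039/5000000000 - 348121233/200000000 * y + 12267403/60000000 * y^2
        + 265807/1000000 * y^3 + 1459/37500 * y^4 + 941/300000 * y^5 + 1/720 * y^6"
    unfolding z by (simp add: eval_nat_numeral field_simps)
  moreover have "0 \<le> y^2" "0 \<le> y^3" "0 \<le> y^4" "0 \<le> y^5" "0 \<le> y^6"
    using y by simp_all
  ultimately show ?thesis using y by linarith
qed

text \<open>Up to 1.13 the key inequality holds outright: bound 1 - cos z above and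
  sin z, 1 + cos z below by Taylor polynomials and apply the polynomial inequality.\<close>

lemma small_angle_estimate:
  fixes z :: real assumes "0 < z" "z \<le> 113/100"
  shows "(pi - z) * (1 - cos z) \<le> sin z * (1 + cos z)"
proof -
  have z: "0 < z" "z \<le> pi/2" using assms pi_approx by simp_all
  have z2: "z^2 \<le> 12769/10000"
    using power_mono[OF assms(2), of 2] assms by (simp add: power2_eq_square)
  have cos_lower: "1 - z^2/2 + z^4/24 - z^6/720 \<le> cos z" using cos_ge_taylor6[OF z] .
  have "z^6/720 \<le> z^4/24"
  proof -
    have "z^6 = z^4 * z^2" by (simp flip: power_add)
    also have "\<dots> \<le> z^4 * 30" using z2 by (intro mult_left_mono) auto
    finally show ?thesis by simp
  qed
  then have one_plus_cos: "2 - z^2/2 \<le> 1 + cos z" using cos_lower by simp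
  have sin_lower_nonneg: "0 \<le> z - z^3/6"
  proof -
    have "z^3 = z * z^2" by (simp flip: power_add add: numeral_eq_Suc)
    also have "\<dots> \<le> z * 6" using z2 z by (intro mult_left_mono) auto
    finally show ?thesis by simp
  qed
  have "(pi - z) * (1 - cos z) \<le> (31416/10000 - z) * (1 - cos z)"
    using pi_le_31416 by (intro mult_right_mono) auto
  also have "\<dots> \<le> (31416/10000 - z) * (z^2/2 - z^4/24 + z^6/720)"
    using cos_lower pi_le_31416 z by (intro mult_left_mono) auto
  also have "\<dots> = z * ((31416/10000 - z) * (z/2 - z^3/24 + z^5/720))"
    by (simp add: eval_nat_numeral field_simps)
  also have "\<dots> \<le> z * ((1 - z^2/6) * (2 - z^2/2))"
    using small_angle_polynomial assms by (intro mult_left_mono) auto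
  also have "\<dots> = (z - z^3/6) * (2 - z^2/2)"
    by (simp add: eval_nat_numeral field_simps)
  also have "\<dots> \<le> sin z * (1 + cos z)"
    using sin_ge_taylor3[OF z] sin_lower_nonneg one_plus_cos z2 by (intro mult_mono) auto
  finally show ?thesis .
qed

lemma angle_estimate:
  fixes z :: real assumes "0 < z" "z < pi/2" and "sin z \<le> (pi - z) * cos z"
  shows "(pi - z) * (1 - cos z) \<le> sin z * (1 + cos z)"
proof (cases "z \<le> 113/100")
  case True
  then show ?thesis using small_angle_estimate assms by simp
next
  case False
  then show ?thesis using supplement_times_cos_lt_sin[of z] assms by simp
qed

lemma tanh_le_self:
  fixes x :: real assumes "0 \<le> x"
  shows "tanh x \<le> x"
proof -
  have "0 - tanh 0 \<le> x - tanh x"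
  proof (rule DERIV_nonneg_imp_nondecreasing[OF assms, where f = "\<lambda>x. x - tanh x"])
    fix y :: real
    have "cosh y \<noteq> 0" by (metis cosh_real_pos less_irrefl)
    then have "DERIV (\<lambda>x. x - tanh x) y :> tanh y ^ 2"
      by (auto intro!: derivative_eq_intros)
    then show "\<exists>d. DERIV (\<lambda>x. x - tanh x) y :> d \<and> 0 \<le> d" by force
  qed
  then show ?thesis by simp
qed

lemma self_le_sinh:
  fixes x :: real assumes "0 \<le> x"
  shows "x \<le> sinh x"
  using real_le_x_sinh[OF assms] by (simp add: sinh_def exp_minus)

lemma sinh_cosh_ln_csc_plus_cot:
  fixes \<alpha> :: real assumes "0 < \<alpha>" "\<alpha> < pi/2"
  shows "sinh (ln (1 / sin \<alpha> + cot \<alpha>)) = cot \<alpha>"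
    and "cosh (ln (1 / sin \<alpha> + cot \<alpha>)) = 1 / sin \<alpha>"
proof -
  define s c where "s = sin \<alpha>" and "c = cos \<alpha>"
  have s: "0 < s" and c: "0 < c" using assms by (simp_all add: s_def c_def sin_gt_zero cos_gt_zero)
  have pythagoras: "s * s = (1 - c) * (1 + c)"
    using sin_cos_squared_add[of \<alpha>] by (simp add: s_def c_def algebra_simps power2_eq_square)
  have X: "1 / sin \<alpha> + cot \<alpha> = (1 + c) / s"
    by (simp add: s_def c_def cot_def add_divide_distrib)
  have inv: "inverse ((1 + c) / s) = (1 - c) / s"
    using s c pythagoras by (simp add: field_simps)
  have pos: "0 < (1 + c) / s" using s c by simp
  show "sinh (ln (1 / sin \<alpha> + cot \<alpha>)) = cot \<alpha>"
    unfolding X sinh_ln_real[OF pos] inv using s by (simp add: cot_def s_def c_def field_simps)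
  show "cosh (ln (1 / sin \<alpha> + cot \<alpha>)) = 1 / sin \<alpha>"
    unfolding X cosh_ln_real[OF pos] inv using s by (simp add: s_def field_simps)
qed

lemma one_plus_le_recip_plus:
  fixes s H :: real assumes "0 < s" "s \<le> 1" "s * H \<le> 1"
  shows "1 + H \<le> 1 / s + s * H"
proof -
  have "0 \<le> (1 / s - H) * (1 - s)"
    using assms by (intro mult_nonneg_nonneg) (auto simp: field_simps)
  then show ?thesis using assms(1) by (simp add: field_simps)
qed

lemma alpha_side:
  fixes \<alpha> :: real assumes "0 < \<alpha>" "\<alpha> < pi/2"
  defines "H \<equiv> ln (1 / sin \<alpha> + cot \<alpha>) / cos \<alpha>"
  shows "1 \<le> H"
    and "1 + H \<le> 1 / sin \<alpha> + (1 / cot \<alpha>) * ln (1 / sin \<alpha> + cot \<alpha>)"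
proof -
  define L where "L = ln (1 / sin \<alpha> + cot \<alpha>)"
  have s: "0 < sin \<alpha>" and c: "0 < cos \<alpha>"
    using assms by (simp_all add: sin_gt_zero cos_gt_zero)
  have sinh_L: "sinh L = cot \<alpha>" and cosh_L: "cosh L = 1 / sin \<alpha>"
    using sinh_cosh_ln_csc_plus_cot[OF assms(1,2)] by (simp_all add: L_def)
  have "0 \<le> sinh L" using sinh_L s c by (simp add: cot_def)
  then have "0 \<le> L" by simp
  have "tanh L = cos \<alpha>" using sinh_L cosh_L s by (simp add: tanh_def cot_def)
  then have "cos \<alpha> \<le> L" using tanh_le_self[OF \<open>0 \<le> L\<close>] by simp
  then show "1 \<le> H" using c by (simp add: H_def L_def)
  have "L \<le> cot \<alpha>" using self_le_sinh[OF \<open>0 \<le> L\<close>] sinh_L by simp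
  then have "sin \<alpha> * H \<le> 1" using s c by (simp add: H_def L_def cot_def field_simps)
  then have "1 + H \<le> 1 / sin \<alpha> + sin \<alpha> * H"
    using s by (intro one_plus_le_recip_plus) auto
  also have "sin \<alpha> * H = (1 / cot \<alpha>) * L" by (simp add: H_def L_def cot_def)
  finally show "1 + H \<le> 1 / sin \<alpha> + (1 / cot \<alpha>) * ln (1 / sin \<alpha> + cot \<alpha>)"
    by (simp add: L_def)
qed

lemma theta_side:
  fixes \<theta> :: real assumes "0 < \<theta>" "\<theta> < pi/2" and "1 \<le> (pi - \<theta>) * cot \<theta>"
  shows "(pi - \<theta>) / sin \<theta> - cos \<theta> \<le> 1 + (pi - \<theta>) * cot \<theta>"
proof -
  have s: "0 < sin \<theta>" using assms by (simp add: sin_gt_zero)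
  have "sin \<theta> \<le> (pi - \<theta>) * cos \<theta>" using assms(3) s by (simp add: cot_def field_simps)
  then have "(pi - \<theta>) * (1 - cos \<theta>) \<le> sin \<theta> * (1 + cos \<theta>)"
    using angle_estimate assms by simp
  then have numerators: "(pi - \<theta>) - cos \<theta> * sin \<theta> \<le> sin \<theta> + (pi - \<theta>) * cos \<theta>"
    by (simp add: algebra_simps)
  have "(pi - \<theta>) / sin \<theta> - cos \<theta> = ((pi - \<theta>) - cos \<theta> * sin \<theta>) / sin \<theta>"
    using s by (simp add: field_simps)
  also have "\<dots> \<le> (sin \<theta> + (pi - \<theta>) * cos \<theta>) / sin \<theta>"
    using numerators s by (intro divide_right_mono) auto
  also have "\<dots> = 1 + (pi - \<theta>) * cot \<theta>"
    using s by (simp add: cot_def field_simps)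
  finally show ?thesis .
qed

theorem lemma4p6:
  fixes \<alpha> \<theta>\<^sub>2 :: real
  assumes "0 < \<alpha>" "\<alpha> < pi / 2" "0 < \<theta>\<^sub>2" "\<theta>\<^sub>2 < pi / 2"
    and "(1 / cos \<alpha>) * ln (1 / sin \<alpha> + cot \<alpha>) = (pi - \<theta>\<^sub>2) * cot \<theta>\<^sub>2"
  shows "1 / sin \<alpha> + (1 / cot \<alpha>) * ln (1 / sin \<alpha> + cot \<alpha>)
           \<ge> (pi - \<theta>\<^sub>2) / sin \<theta>\<^sub>2 - cos \<theta>\<^sub>2"
proof -
  have hypothesis: "ln (1 / sin \<alpha> + cot \<alpha>) / cos \<alpha> = (pi - \<theta>\<^sub>2) * cot \<theta>\<^sub>2"
    using assms(5) by simp
  have "1 \<le> (pi - \<theta>\<^sub>2) * cot \<theta>\<^sub>2"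
    using alpha_side(1)[OF assms(1,2)] by (simp only: hypothesis)
  then have "(pi - \<theta>\<^sub>2) / sin \<theta>\<^sub>2 - cos \<theta>\<^sub>2 \<le> 1 + (pi - \<theta>\<^sub>2) * cot \<theta>\<^sub>2"
    by (rule theta_side[OF assms(3,4)])
  also have "\<dots> = 1 + ln (1 / sin \<alpha> + cot \<alpha>) / cos \<alpha>"
    by (simp only: hypothesis)
  also have "\<dots> \<le> 1 / sin \<alpha> + (1 / cot \<alpha>) * ln (1 / sin \<alpha> + cot \<alpha>)"
    by (rule alpha_side(2)[OF assms(1,2)])
  finally show ?thesis .
qed

end
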